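(* The set $S_Z$ is empty.
   Context: All graphs are finite and simple. A graph $G$ is a minimal prime graph complement if $G$ has at least $2$ vertices and: (1) the complement $\overline{G}$ is connected; (2) $G$ is triangle-free; (3) $G$ is $3$-colorable; (4) for any two distinct nonadjacent vertices $u,v$ of $G$, adding the edge $uv$ to $G$ yields a graph that either contains a triangle or is not $3$-colorable. Standing setup: $\Gamma$ is a minimal prime graph complement with a vertex $X$ of degree $2$, whose two neighbors are $A$ and $B$. Among the vertices of $\Gamma$ other than $X,A,B$: $S_A$ is the set of those adjacent to $A$ but not $B$; $S_B$ the set of those adjacent to $B$ but not $A$; $S_Y$ the set of those adjacent to both $A$ and $B$; $S_Z$ the set of those adjacent to neither $A$ nor $B$. *)

theory Defs
  imports Main
begin

definition simple_graph :: "'a set \<Rightarrow> ('a \<Rightarrow> 'a \<Rightarrow> bool) \<Rightarrow> bool" where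
  "simple_graph V E \<longleftrightarrow> finite V \<and> (\<forall>u v. E u v \<longrightarrow> u \<in> V \<and> v \<in> V)
     \<and> (\<forall>u v. E u v \<longrightarrow> E v u) \<and> (\<forall>u. \<not> E u u)"

definition compl_edge :: "'a set \<Rightarrow> ('a \<Rightarrow> 'a \<Rightarrow> bool) \<Rightarrow> 'a \<Rightarrow> 'a \<Rightarrow> bool" where
  "compl_edge V E u v \<longleftrightarrow> u \<in> V \<and> v \<in> V \<and> u \<noteq> v \<and> \<not> E u v"

definition connected_graph :: "'a set \<Rightarrow> ('a \<Rightarrow> 'a \<Rightarrow> bool) \<Rightarrow> bool" where
  "connected_graph V E \<longleftrightarrow> V \<noteq> {} \<and> (\<forall>u\<in>V. \<forall>v\<in>V. E\<^sup>*\<^sup>* u v)"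

definition triangle_free :: "'a set \<Rightarrow> ('a \<Rightarrow> 'a \<Rightarrow> bool) \<Rightarrow> bool" where
  "triangle_free V E \<longleftrightarrow> \<not> (\<exists>a\<in>V. \<exists>b\<in>V. \<exists>c\<in>V. E a b \<and> E b c \<and> E a c)"

definition three_colorable :: "'a set \<Rightarrow> ('a \<Rightarrow> 'a \<Rightarrow> bool) \<Rightarrow> bool" where
  "three_colorable V E \<longleftrightarrow> (\<exists>f :: 'a \<Rightarrow> nat. (\<forall>v\<in>V. f v < 3)
      \<and> (\<forall>u\<in>V. \<forall>v\<in>V. E u v \<longrightarrow> f u \<noteq> f v))"

definition add_edge :: "('a \<Rightarrow> 'a \<Rightarrow> bool) \<Rightarrow> 'a \<Rightarrow> 'a \<Rightarrow> 'a \<Rightarrow> 'a \<Rightarrow> bool" where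
  "add_edge E u v = (\<lambda>x y. E x y \<or> (x = u \<and> y = v) \<or> (x = v \<and> y = u))"

definition minimal_prime_graph_complement :: "'a set \<Rightarrow> ('a \<Rightarrow> 'a \<Rightarrow> bool) \<Rightarrow> bool" where
  "minimal_prime_graph_complement V E \<longleftrightarrow>
     simple_graph V E \<and> card V \<ge> 2
     \<and> connected_graph V (compl_edge V E)
     \<and> triangle_free V E
     \<and> three_colorable V E
     \<and> (\<forall>u\<in>V. \<forall>v\<in>V. u \<noteq> v \<and> \<not> E u v \<longrightarrow>
          \<not> triangle_free V (add_edge E u v) \<or> \<not> three_colorable V (add_edge E u v))"

definition degree :: "'a set \<Rightarrow> ('a \<Rightarrow> 'a \<Rightarrow> bool) \<Rightarrow> 'a \<Rightarrow> nat" where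
  "degree V E x = card {y\<in>V. E x y}"

end

theory Submission
  imports Defs
begin

text \<open>Adding an edge \<open>Xz\<close> for \<open>z \<in> S\<^sub>Z\<close> creates no triangle, because the only neighbours of
  \<open>X\<close> are \<open>A\<close> and \<open>B\<close>; so by minimality every 3-colouring gives \<open>z\<close> the colour of \<open>X\<close>. Hence
  \<open>S\<^sub>Z\<close> is independent, and then colouring the neighbours of \<open>B\<close> with 0, the remaining
  neighbours of \<open>A\<close> with 1 and everything else with 2 is a proper 3-colouring in which
  \<open>X\<close> and \<open>z\<close> get different colours.\<close>

definition three_coloring :: "'a set \<Rightarrow> ('a \<Rightarrow> 'a \<Rightarrow> bool) \<Rightarrow> ('a \<Rightarrow> nat) \<Rightarrow> bool" where
  "three_coloring V E f \<longleftrightarrow> (\<forall>v\<in>V. f v < 3) \<and> (\<forall>u\<in>V. \<forall>v\<in>V. E u v \<longrightarrow> f u \<noteq> f v)"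

lemma three_colorable_iff_three_coloring:
  "three_colorable V E \<longleftrightarrow> (\<exists>f. three_coloring V E f)"
  unfolding three_colorable_def three_coloring_def by blast

lemma three_coloring_add_edge:
  assumes "three_coloring V E f" and "f u \<noteq> f v"
  shows "three_coloring V (add_edge E u v) f"
  using assms unfolding three_coloring_def add_edge_def by auto

lemma triangle_free_add_edge:
  assumes "simple_graph V E" and "triangle_free V E"
    and "u \<noteq> v" and "\<not> E u v" and "\<And>w. \<not> (E u w \<and> E v w)"
  shows "triangle_free V (add_edge E u v)"
  using assms unfolding simple_graph_def triangle_free_def add_edge_def by metis

lemma neighbour_of_degree_two_vertex:
  assumes "simple_graph V E" and "degree V E x = 2"
    and "E x a" and "E x b" and "a \<noteq> b" and "E x y"
  shows "y = a \<or> y = b"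
proof -
  have in_V: "a \<in> V" "b \<in> V" "y \<in> V"
    using assms(1,3,4,6) unfolding simple_graph_def by auto
  have "{a, b} \<subseteq> {w\<in>V. E x w}" and "finite {w\<in>V. E x w}"
    using assms(1,3,4) in_V unfolding simple_graph_def by auto
  moreover have "card {a, b} = card {w\<in>V. E x w}"
    using assms(2,5) unfolding degree_def by simp
  ultimately have "{w\<in>V. E x w} = {a, b}"
    by (metis card_subset_eq)
  then show ?thesis using assms(6) in_V by blast
qed

lemma minimal_prime_graph_complement_same_color:
  assumes "minimal_prime_graph_complement V E" and "three_coloring V E f"
    and "u \<in> V" and "v \<in> V" and "u \<noteq> v" and "\<not> E u v" and "\<And>w. \<not> (E u w \<and> E v w)"
  shows "f u = f v"
proof (rule ccontr)
  assume "f u \<noteq> f v"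
  then have "three_colorable V (add_edge E u v)"
    using assms(2) three_coloring_add_edge three_colorable_iff_three_coloring by metis
  moreover have "triangle_free V (add_edge E u v)"
    using assms triangle_free_add_edge unfolding minimal_prime_graph_complement_def by metis
  ultimately show False
    using assms(1,3-6) unfolding minimal_prime_graph_complement_def by blast
qed

text \<open>Colour classes: \<open>N(b)\<close>, \<open>N(a) - N(b)\<close> and the rest; the first two are independent
  because the graph is triangle-free.\<close>

lemma three_coloring_by_two_neighbourhoods:
  assumes "simple_graph V E" and "triangle_free V E"
    and "\<And>u v. E u v \<Longrightarrow> E u a \<or> E u b \<or> E v a \<or> E v b"
  shows "three_coloring V E (\<lambda>v. if E v b then 0 else if E v a then 1 else 2)"
  unfolding three_coloring_def
proof (intro conjI ballI impI)
  fix u v assume "u \<in> V" "v \<in> V" "E u v"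
  have "E x y \<Longrightarrow> x \<in> V \<and> y \<in> V" and "E x y \<Longrightarrow> E y x" for x y
    using assms(1) unfolding simple_graph_def by auto
  then have "\<not> (E u c \<and> E v c)" for c
    using assms(2) \<open>E u v\<close> unfolding triangle_free_def by blast
  then show "(if E u b then 0 else if E u a then 1 else 2) \<noteq>
      (if E v b then 0 else if E v a then 1 else (2::nat))"
    using assms(3)[OF \<open>E u v\<close>] by auto
qed simp

theorem lemma10:
  fixes V :: "'a set" and E :: "'a \<Rightarrow> 'a \<Rightarrow> bool" and X A B :: 'a
  assumes "minimal_prime_graph_complement V E"
    and "X \<in> V" and "degree V E X = 2"
    and "E X A" and "E X B" and "A \<noteq> B"
  shows "{z \<in> V - {X, A, B}. \<not> E z A \<and> \<not> E z B} = {}"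
proof (rule ccontr)
  let ?S\<^sub>Z = "{z \<in> V - {X, A, B}. \<not> E z A \<and> \<not> E z B}"
  have simple: "simple_graph V E" and tf: "triangle_free V E" and "three_colorable V E"
    using assms(1) unfolding minimal_prime_graph_complement_def by auto
  then obtain f where f: "three_coloring V E f"
    using three_colorable_iff_three_coloring by blast
  have sym: "\<And>u v. E u v \<Longrightarrow> E v u" and in_V: "\<And>u v. E u v \<Longrightarrow> u \<in> V"
    using simple unfolding simple_graph_def by auto
  have neighbour_X: "\<And>y. E X y \<Longrightarrow> y = A \<or> y = B"
    using neighbour_of_degree_two_vertex[OF simple assms(3-6)] by blast
  have colored_as_X: "g z = g X" if g: "three_coloring V E g" and z: "z \<in> ?S\<^sub>Z" for g z
  proof -
    have "\<not> (E z w \<and> E X w)" for w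
      using z neighbour_X sym by blast
    moreover have "\<not> E z X" using z neighbour_X sym by blast
    ultimately show ?thesis
      using minimal_prime_graph_complement_same_color[OF assms(1) g] z assms(2) by blast
  qed
  have "E u A \<or> E u B \<or> E v A \<or> E v B" if "E u v" for u v
  proof (rule ccontr)
    assume "\<not> ?thesis"
    then have "u \<in> ?S\<^sub>Z" "v \<in> ?S\<^sub>Z"
      using that assms(4,5) sym in_V by blast+
    then have "f u = f v" using colored_as_X[OF f] by metis
    then show False using f that in_V sym unfolding three_coloring_def by blast
  qed
  then have g: "three_coloring V E (\<lambda>v. if E v B then 0 else if E v A then 1 else 2)"
    using three_coloring_by_two_neighbourhoods[OF simple tf] by blast
  assume "?S\<^sub>Z \<noteq> {}"
  then obtain z where "z \<in> ?S\<^sub>Z" by blast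
  then show False using colored_as_X[OF g] assms(5) by auto
qed

end
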